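(* Let $A$ be a locally-complex Cayley--Dickson algebra, let $I\in A$ with $\mathrm{tr}(I)=0$ and $\mathrm{n}(I)=1$, and let $f(x)\in A[x]$. Then for every $\lambda\in\mathbb{C}_I$ we have $f_I(\lambda)\in\mathbb{C}_I$ and $f_I^{\perp}(\lambda)\in\mathbb{C}_I^{\perp}$. Consequently, for $\lambda\in\mathbb{C}_I$, $f(\lambda)=0$ if and only if $f_I(\lambda)=f_I^{\perp}(\lambda)=0$.
   Context: Real Cayley--Dickson algebras: $A_0=\mathbb{R}$ with identity involution, $A_{k+1}=A_k\{\gamma_k\}=A_k\times A_k$ with product $(a,b)(c,d)=(ac+\gamma_k\bar d b,\ da+b\bar c)$ and involution $\overline{(a,b)}=(\bar a,-b)$. A real unital algebra is locally-complex if every non-real element generates a subalgebra isomorphic to $\mathbb{C}$ (for Cayley--Dickson algebras: all $\gamma_k=-1$ up to isomorphism). Trace $\mathrm{tr}(\lambda)=\lambda+\bar\lambda\in\mathbb{R}$, norm $\mathrm{n}(\lambda)=\bar\lambda\lambda\in\mathbb{R}$; $\langle\cdot,\cdot\rangle$ is the symmetric bilinear form with $\langle a,a\rangle=\mathrm{n}(a)$ (the Euclidean inner product). For $I$ with trace $0$ and norm $1$, $\mathbb{C}_I=\mathbb{R}+\mathbb{R}I\cong\mathbb{C}$, $\mathbb{C}_I^\perp=\{a\in A:\langle a,b\rangle=0\ \forall b\in\mathbb{C}_I\}$, and $\pi_I:A\to\mathbb{C}_I$ is the orthogonal projection. $A[x]=A\otimes_{\mathbb{R}}\mathbb{R}[x]$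 with central $x$; for $f(x)=\sum_k a_kx^k$ put $f_I(x)=\sum_k\pi_I(a_k)x^k$ and $f_I^\perp(x)=\sum_k(a_k-\pi_I(a_k))x^k$, so $f=f_I+f_I^\perp$; substitution $f(r)=\sum_k a_k(r^k)$. *)

theory Defs
  imports Main Complex_Main
begin

text \<open>Real Cayley--Dickson algebras A_n with all gamma_k = -1 (the locally-complex ones).
  An element of A_n is a binary tree of depth n with real leaves:
  A_0 = R (leaf CR r), A_(k+1) = A_k x A_k (node CP a b).\<close>

datatype cd = CR real | CP cd cd

fun cd_wf :: "nat \<Rightarrow> cd \<Rightarrow> bool" where
  "cd_wf 0 x = (case x of CR _ \<Rightarrow> True | CP _ _ \<Rightarrow> False)"
| "cd_wf (Suc n) x = (case x of CR _ \<Rightarrow> False | CP a b \<Rightarrow> cd_wf n a \<and> cd_wf n b)"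

definition CD :: "nat \<Rightarrow> cd set" where
  "CD n = {x. cd_wf n x}"

fun cd_of_real :: "nat \<Rightarrow> real \<Rightarrow> cd" where
  "cd_of_real 0 r = CR r"
| "cd_of_real (Suc n) r = CP (cd_of_real n r) (cd_of_real n 0)"

abbreviation cd_zero :: "nat \<Rightarrow> cd" where "cd_zero n \<equiv> cd_of_real n 0"
abbreviation cd_one :: "nat \<Rightarrow> cd" where "cd_one n \<equiv> cd_of_real n 1"

fun cd_add :: "cd \<Rightarrow> cd \<Rightarrow> cd" where
  "cd_add (CR a) (CR b) = CR (a + b)"
| "cd_add (CP a b) (CP c d) = CP (cd_add a c) (cd_add b d)"
| "cd_add _ _ = CR 0"

fun cd_scale :: "real \<Rightarrow> cd \<Rightarrow> cd" where
  "cd_scale s (CR a) = CR (s * a)"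
| "cd_scale s (CP a b) = CP (cd_scale s a) (cd_scale s b)"

definition cd_neg :: "cd \<Rightarrow> cd" where "cd_neg x = cd_scale (-1) x"

definition cd_diff :: "cd \<Rightarrow> cd \<Rightarrow> cd" where "cd_diff x y = cd_add x (cd_neg y)"

fun cd_conj :: "cd \<Rightarrow> cd" where
  "cd_conj (CR a) = CR a"
| "cd_conj (CP a b) = CP (cd_conj a) (cd_neg b)"

lemma size_cd_scale [simp]: "size (cd_scale s x) = size x"
  by (induction x) auto

lemma size_cd_conj [simp]: "size (cd_conj x) = size x"
  by (induction x) (auto simp: cd_neg_def)

function (sequential) cd_mult :: "cd \<Rightarrow> cd \<Rightarrow> cd" where
  "cd_mult (CR a) (CR c) = CR (a * c)"
| "cd_mult (CP a b) (CP c d) =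
     CP (cd_add (cd_mult a c) (cd_neg (cd_mult (cd_conj d) b)))
        (cd_add (cd_mult d a) (cd_mult b (cd_conj c)))"
| "cd_mult _ _ = CR 0"
  by pat_completeness auto
termination by (relation "measure (\<lambda>(x, y). size x + size y)") auto

text \<open>Real part (coefficient of 1) of an element; used to read off real-valued
  quantities such as trace and norm which lie in R = R*1.\<close>
fun cd_re :: "cd \<Rightarrow> real" where
  "cd_re (CR a) = a"
| "cd_re (CP a b) = cd_re a"

definition cd_tr :: "cd \<Rightarrow> real" where
  "cd_tr x = cd_re (cd_add x (cd_conj x))"

definition cd_norm :: "cd \<Rightarrow> real" where
  "cd_norm x = cd_re (cd_mult (cd_conj x) x)"

definition cd_inner :: "cd \<Rightarrow> cd \<Rightarrow> real" where
  "cd_inner x y = (cd_norm (cd_add x y) - cd_norm x - cd_norm y) / 2"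

definition CI :: "nat \<Rightarrow> cd \<Rightarrow> cd set" where
  "CI n I = {cd_add (cd_of_real n r) (cd_scale s I) | r s. True}"

definition CI_perp :: "nat \<Rightarrow> cd \<Rightarrow> cd set" where
  "CI_perp n I = {a \<in> CD n. \<forall>b \<in> CI n I. cd_inner a b = 0}"

definition proj_I :: "nat \<Rightarrow> cd \<Rightarrow> cd \<Rightarrow> cd" where
  "proj_I n I a = (THE p. p \<in> CI n I \<and> cd_diff a p \<in> CI_perp n I)"

text \<open>Polynomials in A_n[x] as coefficient lists [a_0, a_1, ...]; powers r^k
  defined by r^0 = 1, r^(k+1) = r r^k (A_n is power-associative).\<close>
fun cd_pow :: "nat \<Rightarrow> cd \<Rightarrow> nat \<Rightarrow> cd" where
  "cd_pow n r 0 = cd_one n"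
| "cd_pow n r (Suc k) = cd_mult r (cd_pow n r k)"

fun cd_sum :: "nat \<Rightarrow> cd list \<Rightarrow> cd" where
  "cd_sum n [] = cd_zero n"
| "cd_sum n (x # xs) = cd_add x (cd_sum n xs)"

definition poly_eval :: "nat \<Rightarrow> cd list \<Rightarrow> cd \<Rightarrow> cd" where
  "poly_eval n f r = cd_sum n [cd_mult (f ! k) (cd_pow n r k). k \<leftarrow> [0..<length f]]"

definition poly_I :: "nat \<Rightarrow> cd \<Rightarrow> cd list \<Rightarrow> cd list" where
  "poly_I n I f = map (proj_I n I) f"

definition poly_I_perp :: "nat \<Rightarrow> cd \<Rightarrow> cd list \<Rightarrow> cd list" where
  "poly_I_perp n I f = map (\<lambda>a. cd_diff a (proj_I n I a)) f"

end

theory Submission imports Defs begin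

text \<open>The coordinate inner product of A_n is the form with <a,a> = n(a), and right
  multiplication by c is adjoint to right multiplication by conj c. Since C_I is a
  subalgebra closed under conjugation (I I = -1), it follows that C_I^perp C_I lies in
  C_I^perp. Splitting every coefficient as a_k = pi_I(a_k) + (a_k - pi_I(a_k)) thus writes
  f(lambda) = sum a_k lambda^k as f_I(lambda) + f_I^perp(lambda) with the first summand
  in C_I and the second orthogonal to it, and a sum of two orthogonal vectors vanishes
  only if both do.\<close>

lemma cd_wf_add [simp]: "cd_wf n x \<Longrightarrow> cd_wf n y \<Longrightarrow> cd_wf n (cd_add x y)"
  by (induction n arbitrary: x y) (auto split: cd.splits)

lemma cd_wf_scale [simp]: "cd_wf n x \<Longrightarrow> cd_wf n (cd_scale s x)"
  by (induction n arbitrary: x) (auto split: cd.splits)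

lemma cd_wf_neg [simp]: "cd_wf n x \<Longrightarrow> cd_wf n (cd_neg x)"
  by (simp add: cd_neg_def)

lemma cd_wf_diff [simp]: "cd_wf n x \<Longrightarrow> cd_wf n y \<Longrightarrow> cd_wf n (cd_diff x y)"
  by (simp add: cd_diff_def)

lemma cd_wf_conj [simp]: "cd_wf n x \<Longrightarrow> cd_wf n (cd_conj x)"
  by (induction n arbitrary: x) (auto split: cd.splits)

lemma cd_wf_mult [simp]: "cd_wf n x \<Longrightarrow> cd_wf n y \<Longrightarrow> cd_wf n (cd_mult x y)"
  by (induction n arbitrary: x y) (auto split: cd.splits)

lemma cd_wf_of_real [simp]: "cd_wf n (cd_of_real n r)"
  by (induction n arbitrary: r) auto

lemma cd_wf_pow [simp]: "cd_wf n r \<Longrightarrow> cd_wf n (cd_pow n r k)"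
  by (induction k) auto

lemma cd_wf_sum: "(\<And>x. x \<in> set xs \<Longrightarrow> cd_wf n x) \<Longrightarrow> cd_wf n (cd_sum n xs)"
  by (induction xs) auto

lemma cd_add_commute: "cd_wf n x \<Longrightarrow> cd_wf n y \<Longrightarrow> cd_add x y = cd_add y x"
  by (induction n arbitrary: x y) (auto split: cd.splits)

lemma cd_add_assoc:
  "cd_wf n x \<Longrightarrow> cd_wf n y \<Longrightarrow> cd_wf n z \<Longrightarrow> cd_add (cd_add x y) z = cd_add x (cd_add y z)"
  by (induction n arbitrary: x y z) (auto split: cd.splits)

lemma cd_add_interchange:
  "cd_wf n a \<Longrightarrow> cd_wf n b \<Longrightarrow> cd_wf n c \<Longrightarrow> cd_wf n d \<Longrightarrow>
    cd_add (cd_add a b) (cd_add c d) = cd_add (cd_add a c) (cd_add b d)"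
  by (induction n arbitrary: a b c d) (auto split: cd.splits)

lemma cd_add_zero_right: "cd_wf n x \<Longrightarrow> cd_add x (cd_zero n) = x"
  by (induction n arbitrary: x) (auto split: cd.splits)

lemma cd_add_zero_left: "cd_wf n x \<Longrightarrow> cd_add (cd_zero n) x = x"
  by (induction n arbitrary: x) (auto split: cd.splits)

lemma cd_add_neg_self: "cd_wf n x \<Longrightarrow> cd_add x (cd_neg x) = cd_zero n"
  by (induction n arbitrary: x) (auto split: cd.splits simp: cd_neg_def)

lemma cd_add_diff_cancel: "cd_wf n x \<Longrightarrow> cd_wf n y \<Longrightarrow> cd_add y (cd_diff x y) = x"
  by (simp add: cd_diff_def cd_add_commute[of n x] flip: cd_add_assoc[of n])
    (simp add: cd_add_neg_self cd_add_zero_left)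

lemma cd_add_of_real [simp]: "cd_add (cd_of_real n r) (cd_of_real n t) = cd_of_real n (r + t)"
  by (induction n arbitrary: r t) auto

lemma cd_scale_scale [simp]: "cd_scale s (cd_scale t x) = cd_scale (s * t) x"
  by (induction x) auto

lemma cd_scale_one [simp]: "cd_scale 1 x = x"
  by (induction x) auto

lemma cd_scale_add: "cd_scale s (cd_add x y) = cd_add (cd_scale s x) (cd_scale s y)"
  by (induction x y rule: cd_add.induct) (auto simp: algebra_simps)

lemma cd_add_scale: "cd_wf n x \<Longrightarrow> cd_add (cd_scale s x) (cd_scale t x) = cd_scale (s + t) x"
  by (induction n arbitrary: x) (auto split: cd.splits simp: algebra_simps)

lemma cd_scale_zero: "cd_wf n x \<Longrightarrow> cd_scale 0 x = cd_zero n"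
  by (induction n arbitrary: x) (auto split: cd.splits)

lemma cd_scale_of_real [simp]: "cd_scale s (cd_of_real n r) = cd_of_real n (s * r)"
  by (induction n arbitrary: r) auto

lemma cd_neg_add: "cd_neg (cd_add x y) = cd_add (cd_neg x) (cd_neg y)"
  by (simp add: cd_neg_def cd_scale_add)

lemma cd_conj_add:
  "cd_wf n x \<Longrightarrow> cd_wf n y \<Longrightarrow> cd_conj (cd_add x y) = cd_add (cd_conj x) (cd_conj y)"
  by (induction n arbitrary: x y) (auto split: cd.splits simp: cd_neg_def cd_scale_add)

lemma cd_conj_scale: "cd_conj (cd_scale s x) = cd_scale s (cd_conj x)"
  by (induction x) (auto simp: cd_neg_def mult.commute)

lemma cd_conj_conj [simp]: "cd_conj (cd_conj x) = x"
  by (induction x) (auto simp: cd_neg_def)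

lemma cd_conj_of_real [simp]: "cd_conj (cd_of_real n r) = cd_of_real n r"
  by (induction n arbitrary: r) (auto simp: cd_neg_def)

lemma cd_re_add: "cd_wf n x \<Longrightarrow> cd_wf n y \<Longrightarrow> cd_re (cd_add x y) = cd_re x + cd_re y"
  by (induction n arbitrary: x y) (auto split: cd.splits)

lemma cd_re_conj [simp]: "cd_re (cd_conj x) = cd_re x"
  by (induction x) auto

lemma cd_re_scale [simp]: "cd_re (cd_scale s x) = s * cd_re x"
  by (induction x) auto

lemma cd_re_diff: "cd_wf n x \<Longrightarrow> cd_wf n y \<Longrightarrow> cd_re (cd_diff x y) = cd_re x - cd_re y"
  by (simp add: cd_diff_def cd_neg_def cd_re_add[of n])

lemma cd_re_of_real [simp]: "cd_re (cd_of_real n r) = r"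
  by (induction n) auto

lemma cd_tr_eq: "cd_wf n x \<Longrightarrow> cd_tr x = 2 * cd_re x"
  by (simp add: cd_tr_def cd_re_add)

lemma cd_conj_eq_neg_if_re_zero: "cd_wf n x \<Longrightarrow> cd_re x = 0 \<Longrightarrow> cd_conj x = cd_neg x"
  by (induction n arbitrary: x) (auto split: cd.splits simp: cd_neg_def)

lemma cd_mult_scale:
  "cd_mult (cd_scale s x) y = cd_scale s (cd_mult x y) \<and> cd_mult x (cd_scale s y) = cd_scale s (cd_mult x y)"
  by (induction x y rule: cd_mult.induct) (auto simp: cd_neg_def cd_conj_scale mult.commute cd_scale_add)

lemma cd_mult_scale_left: "cd_mult (cd_scale s x) y = cd_scale s (cd_mult x y)"
  using cd_mult_scale by blast

lemma cd_mult_scale_right: "cd_mult x (cd_scale s y) = cd_scale s (cd_mult x y)"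
  using cd_mult_scale by blast

lemma cd_distrib:
  "cd_wf n x \<Longrightarrow> cd_wf n y \<Longrightarrow> cd_wf n z \<Longrightarrow>
    cd_mult (cd_add x y) z = cd_add (cd_mult x z) (cd_mult y z) \<and>
    cd_mult z (cd_add x y) = cd_add (cd_mult z x) (cd_mult z y)"
proof (induction n arbitrary: x y z)
  case 0
  then show ?case by (auto split: cd.splits simp: algebra_simps)
next
  case (Suc n)
  then obtain a b c d e f where xyz: "x = CP a b" "y = CP c d" "z = CP e f"
    and wf: "cd_wf n a" "cd_wf n b" "cd_wf n c" "cd_wf n d" "cd_wf n e" "cd_wf n f"
    by (auto split: cd.splits)
  show ?case
    using wf Suc.IH[of a c e] Suc.IH[of b d "cd_conj f"] Suc.IH[of a c f]
      Suc.IH[of b d "cd_conj e"] Suc.IH[of "cd_conj a" "cd_conj c" f]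
      Suc.IH[of "cd_conj b" "cd_conj d" f] Suc.IH[of "cd_conj b" "cd_conj d" e]
      Suc.IH[of a c "cd_conj f"] Suc.IH[of b d e]
    by (simp add: xyz cd_conj_add[of n] cd_neg_add cd_add_interchange[of n])
qed

lemma cd_distrib_right:
  "cd_wf n x \<Longrightarrow> cd_wf n y \<Longrightarrow> cd_wf n z \<Longrightarrow>
    cd_mult (cd_add x y) z = cd_add (cd_mult x z) (cd_mult y z)"
  using cd_distrib by blast

lemma cd_distrib_left:
  "cd_wf n x \<Longrightarrow> cd_wf n y \<Longrightarrow> cd_wf n z \<Longrightarrow>
    cd_mult z (cd_add x y) = cd_add (cd_mult z x) (cd_mult z y)"
  using cd_distrib by blast

lemma cd_mult_of_real:
  "cd_wf n x \<Longrightarrow> cd_mult (cd_of_real n r) x = cd_scale r x \<and> cd_mult x (cd_of_real n r) = cd_scale r x"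
proof (induction n arbitrary: x r)
  case 0
  then show ?case by (auto split: cd.splits simp: algebra_simps)
next
  case (Suc n)
  then obtain a b where x: "x = CP a b" and wf: "cd_wf n a" "cd_wf n b"
    by (auto split: cd.splits)
  show ?case
    using wf Suc.IH[of a r] Suc.IH[of b r] Suc.IH[of "cd_conj b" 0] Suc.IH[of "cd_conj a" 0]
      Suc.IH[of a 0] Suc.IH[of b 0]
    by (simp add: x cd_scale_zero[of n] cd_neg_def cd_add_zero_right cd_add_zero_left)
qed

lemma cd_mult_of_real_left: "cd_wf n x \<Longrightarrow> cd_mult (cd_of_real n r) x = cd_scale r x"
  using cd_mult_of_real by blast

lemma cd_mult_of_real_right: "cd_wf n x \<Longrightarrow> cd_mult x (cd_of_real n r) = cd_scale r x"
  using cd_mult_of_real by blast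

lemma cd_conj_mult:
  "cd_wf n x \<Longrightarrow> cd_wf n y \<Longrightarrow> cd_conj (cd_mult x y) = cd_mult (cd_conj y) (cd_conj x)"
proof (induction n arbitrary: x y)
  case 0
  then show ?case by (auto split: cd.splits)
next
  case (Suc n)
  then obtain a b c d where xy: "x = CP a b" "y = CP c d"
    and wf: "cd_wf n a" "cd_wf n b" "cd_wf n c" "cd_wf n d"
    by (auto split: cd.splits)
  show ?case
    using wf Suc.IH[of a c] Suc.IH[of "cd_conj d" b]
    by (simp add: xy cd_conj_add[of n] cd_neg_def cd_conj_scale cd_mult_scale_left
        cd_mult_scale_right cd_scale_add cd_add_commute[of n "cd_scale (-1) (cd_mult d a)"])
qed

fun cd_dot :: "cd \<Rightarrow> cd \<Rightarrow> real" where
  "cd_dot (CR a) (CR b) = a * b"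
| "cd_dot (CP a b) (CP c d) = cd_dot a c + cd_dot b d"
| "cd_dot _ _ = 0"

lemma cd_dot_commute: "cd_dot x y = cd_dot y x"
  by (induction x y rule: cd_dot.induct) auto

lemma cd_dot_add_left:
  "cd_wf n x \<Longrightarrow> cd_wf n y \<Longrightarrow> cd_wf n z \<Longrightarrow> cd_dot (cd_add x y) z = cd_dot x z + cd_dot y z"
  by (induction n arbitrary: x y z) (auto split: cd.splits simp: algebra_simps)

lemma cd_dot_add_right:
  "cd_wf n x \<Longrightarrow> cd_wf n y \<Longrightarrow> cd_wf n z \<Longrightarrow> cd_dot z (cd_add x y) = cd_dot z x + cd_dot z y"
  using cd_dot_add_left cd_dot_commute by metis

lemma cd_dot_scale_left: "cd_dot (cd_scale s x) y = s * cd_dot x y"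
  by (induction x y rule: cd_dot.induct) (auto simp: algebra_simps)

lemma cd_dot_scale_right: "cd_dot x (cd_scale s y) = s * cd_dot x y"
  using cd_dot_scale_left cd_dot_commute by metis

lemma cd_dot_diff_left:
  "cd_wf n x \<Longrightarrow> cd_wf n y \<Longrightarrow> cd_wf n z \<Longrightarrow> cd_dot (cd_diff x y) z = cd_dot x z - cd_dot y z"
  by (simp add: cd_diff_def cd_neg_def cd_dot_add_left[of n] cd_dot_scale_left)

lemma cd_dot_conj_conj: "cd_dot (cd_conj x) (cd_conj y) = cd_dot x y"
  by (induction x y rule: cd_dot.induct) (auto simp: cd_neg_def cd_dot_scale_left cd_dot_scale_right)

lemma cd_dot_conj_left: "cd_dot (cd_conj x) y = cd_dot x (cd_conj y)"
  using cd_dot_conj_conj[of x "cd_conj y"] by simp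

lemma cd_dot_of_real_left: "cd_wf n x \<Longrightarrow> cd_dot (cd_of_real n r) x = r * cd_re x"
  by (induction n arbitrary: x r) (auto split: cd.splits)

lemma cd_dot_self_nonneg: "cd_dot x x \<ge> 0"
  by (induction x) auto

lemma cd_dot_self_eq_0: "cd_wf n x \<Longrightarrow> cd_dot x x = 0 \<Longrightarrow> x = cd_zero n"
  by (induction n arbitrary: x)
    (auto split: cd.splits simp: add_nonneg_eq_0_iff cd_dot_self_nonneg)

lemma cd_mult_conj_self: "cd_wf n x \<Longrightarrow> cd_mult (cd_conj x) x = cd_of_real n (cd_dot x x)"
proof (induction n arbitrary: x)
  case 0
  then show ?case by (auto split: cd.splits)
next
  case (Suc n)
  then obtain a b where x: "x = CP a b" and wf: "cd_wf n a" "cd_wf n b"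
    by (auto split: cd.splits)
  have "cd_add (cd_mult b (cd_conj a)) (cd_scale (-1) (cd_mult b (cd_conj a))) = cd_zero n"
    using cd_add_neg_self[of n "cd_mult b (cd_conj a)"] wf by (simp add: cd_neg_def)
  then show ?case
    using wf Suc.IH by (simp add: x cd_neg_def cd_mult_scale_left cd_mult_scale_right)
qed

lemma cd_norm_eq_dot: "cd_wf n x \<Longrightarrow> cd_norm x = cd_dot x x"
  by (simp add: cd_norm_def cd_mult_conj_self)

lemma cd_inner_eq_dot: "cd_wf n x \<Longrightarrow> cd_wf n y \<Longrightarrow> cd_inner x y = cd_dot x y"
  by (simp add: cd_inner_def cd_norm_eq_dot[of n] cd_dot_add_left[of n] cd_dot_add_right[of n]
      cd_dot_commute[of y x])

lemma cd_add_eq_zero_if_orthogonal: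
  assumes wf: "cd_wf n y" "cd_wf n z" and orth: "cd_dot y z = 0"
  shows "cd_add y z = cd_zero n \<longleftrightarrow> y = cd_zero n \<and> z = cd_zero n"
proof
  assume sum: "cd_add y z = cd_zero n"
  have "cd_dot y y = cd_dot (cd_add y z) y"
    using wf orth by (simp add: cd_dot_add_left[of n] cd_dot_commute[of z])
  also have "\<dots> = 0"
    using wf sum by (simp add: cd_dot_of_real_left)
  finally have "y = cd_zero n"
    using wf cd_dot_self_eq_0 by blast
  with sum wf show "y = cd_zero n \<and> z = cd_zero n"
    by (simp add: cd_add_zero_left)
qed simp

text \<open>The first conjunct is needed only to make the induction go through.\<close>
lemma cd_mult_adjoint:
  "cd_wf n x \<Longrightarrow> cd_wf n y \<Longrightarrow> cd_wf n z \<Longrightarrow>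
    cd_dot (cd_mult x y) z = cd_dot y (cd_mult (cd_conj x) z) \<and>
    cd_dot (cd_mult x y) z = cd_dot x (cd_mult z (cd_conj y))"
proof (induction n arbitrary: x y z)
  case 0
  then show ?case by (auto split: cd.splits)
next
  case (Suc n)
  then obtain a b c d e f where xyz: "x = CP a b" "y = CP c d" "z = CP e f"
    and wf: "cd_wf n a" "cd_wf n b" "cd_wf n c" "cd_wf n d" "cd_wf n e" "cd_wf n f"
    by (auto split: cd.splits)
  have ace: "cd_dot (cd_mult a c) e = cd_dot c (cd_mult (cd_conj a) e)"
    "cd_dot (cd_mult a c) e = cd_dot a (cd_mult e (cd_conj c))"
    using Suc.IH[of a c e] wf by auto
  have dbe: "cd_dot (cd_mult (cd_conj d) b) e = cd_dot b (cd_mult d e)"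
    "cd_dot (cd_mult (cd_conj d) b) e = cd_dot d (cd_mult b (cd_conj e))"
    using Suc.IH[of "cd_conj d" b e] wf
    by (auto simp: cd_dot_conj_left cd_conj_mult[of n])
  have daf: "cd_dot (cd_mult d a) f = cd_dot d (cd_mult f (cd_conj a))"
    "cd_dot (cd_mult d a) f = cd_dot a (cd_mult (cd_conj d) f)"
    using Suc.IH[of d a f] wf by auto
  have bcf: "cd_dot (cd_mult b (cd_conj c)) f = cd_dot b (cd_mult f c)"
    "cd_dot (cd_mult b (cd_conj c)) f = cd_dot c (cd_mult (cd_conj f) b)"
    using Suc.IH[of b "cd_conj c" f] wf
    by (auto simp: cd_dot_conj_left cd_conj_mult[of n])
  show ?case
    using wf ace dbe daf bcf
    by (simp add: xyz cd_neg_def cd_dot_add_left[of n] cd_dot_add_right[of n] cd_dot_scale_left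
        cd_dot_scale_right cd_mult_scale_left cd_mult_scale_right cd_conj_scale)
qed

lemma cd_sum_closed:
  "cd_zero n \<in> S \<Longrightarrow> (\<And>a b. a \<in> S \<Longrightarrow> b \<in> S \<Longrightarrow> cd_add a b \<in> S) \<Longrightarrow>
    set xs \<subseteq> S \<Longrightarrow> cd_sum n xs \<in> S"
  by (induction xs) auto

lemma cd_sum_map_add:
  "(\<And>k. k \<in> set ks \<Longrightarrow> cd_wf n (u k) \<and> cd_wf n (v k)) \<Longrightarrow>
    cd_sum n (map (\<lambda>k. cd_add (u k) (v k)) ks) = cd_add (cd_sum n (map u ks)) (cd_sum n (map v ks))"
proof (induction ks)
  case Nil
  then show ?case by simp
next
  case (Cons k ks)
  then have "cd_wf n (cd_sum n (map u ks))" "cd_wf n (cd_sum n (map v ks))"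
    by (auto intro!: cd_wf_sum)
  with Cons show ?case
    by (simp add: cd_add_interchange[of n])
qed

lemma poly_eval_closed:
  assumes "cd_zero n \<in> S" and "\<And>a b. a \<in> S \<Longrightarrow> b \<in> S \<Longrightarrow> cd_add a b \<in> S"
    and "\<And>a k. a \<in> set f \<Longrightarrow> cd_mult a (cd_pow n r k) \<in> S"
  shows "poly_eval n f r \<in> S"
  unfolding poly_eval_def by (rule cd_sum_closed) (use assms in auto)

lemma poly_eval_map_add:
  assumes "\<And>a. a \<in> set f \<Longrightarrow> cd_wf n (u a) \<and> cd_wf n (v a)" and "cd_wf n r"
  shows "poly_eval n (map (\<lambda>a. cd_add (u a) (v a)) f) r
    = cd_add (poly_eval n (map u f) r) (poly_eval n (map v f) r)"
proof -
  have "poly_eval n (map (\<lambda>a. cd_add (u a) (v a)) f) r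
      = cd_sum n (map (\<lambda>k. cd_add (cd_mult (u (f ! k)) (cd_pow n r k))
          (cd_mult (v (f ! k)) (cd_pow n r k))) [0..<length f])"
    unfolding poly_eval_def using assms
    by (intro arg_cong[where f = "cd_sum n"] map_cong) (auto simp: cd_distrib_right[of n])
  also have "\<dots> = cd_add (poly_eval n (map u f) r) (poly_eval n (map v f) r)"
    unfolding poly_eval_def using assms
    by (subst cd_sum_map_add) (auto intro!: arg_cong2[where f = cd_add] arg_cong[where f = "cd_sum n"])
  finally show ?thesis .
qed

definition cd_cplx :: "nat \<Rightarrow> cd \<Rightarrow> real \<Rightarrow> real \<Rightarrow> cd" where
  "cd_cplx n I r s = cd_add (cd_of_real n r) (cd_scale s I)"

lemma CI_eq: "CI n I = {cd_cplx n I r s | r s. True}"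
  by (simp add: CI_def cd_cplx_def)

locale cd_imag_unit =
  fixes n :: nat and I :: cd
  assumes I_in_CD: "I \<in> CD n" and tr_I: "cd_tr I = 0" and norm_I: "cd_norm I = 1"
begin

lemma wf_I [simp]: "cd_wf n I"
  using I_in_CD by (simp add: CD_def)

lemma re_I [simp]: "cd_re I = 0"
  using tr_I by (simp add: cd_tr_eq[of n])

lemma dot_I_I [simp]: "cd_dot I I = 1"
  using norm_I by (simp add: cd_norm_eq_dot[of n])

lemma conj_I: "cd_conj I = cd_neg I"
  by (simp add: cd_conj_eq_neg_if_re_zero[of n])

lemma mult_I_I: "cd_mult I I = cd_of_real n (-1)"
proof -
  have "cd_scale (-1) (cd_mult I I) = cd_one n"
    using cd_mult_conj_self[OF wf_I] by (simp add: conj_I cd_neg_def cd_mult_scale_left)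
  then have "cd_scale (-1) (cd_scale (-1) (cd_mult I I)) = cd_scale (-1) (cd_one n)"
    by simp
  then show ?thesis by simp
qed

lemma wf_cplx [simp]: "cd_wf n (cd_cplx n I r s)"
  by (simp add: cd_cplx_def)

lemma wf_CI: "p \<in> CI n I \<Longrightarrow> cd_wf n p"
  by (auto simp: CI_eq)

lemma cplx_zero: "cd_zero n = cd_cplx n I 0 0"
  by (simp add: cd_cplx_def cd_scale_zero[of n] cd_add_zero_right)

lemma cplx_one: "cd_one n = cd_cplx n I 1 0"
  by (simp add: cd_cplx_def cd_scale_zero[of n] cd_add_zero_right)

lemma cplx_add: "cd_add (cd_cplx n I r1 s1) (cd_cplx n I r2 s2) = cd_cplx n I (r1 + r2) (s1 + s2)"
  by (simp add: cd_cplx_def cd_add_interchange[of n] cd_add_scale[of n])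

lemma cplx_scale: "cd_scale t (cd_cplx n I r s) = cd_cplx n I (t * r) (t * s)"
  by (simp add: cd_cplx_def cd_scale_add)

lemma cplx_mult:
  "cd_mult (cd_cplx n I r1 s1) (cd_cplx n I r2 s2) = cd_cplx n I (r1 * r2 - s1 * s2) (r1 * s2 + s1 * r2)"
proof -
  have times_I: "cd_mult (cd_cplx n I r1 s1) I = cd_cplx n I (- s1) r1"
    by (simp add: cd_cplx_def cd_distrib_right[of n] cd_mult_of_real_left[of n] cd_mult_scale_left
        mult_I_I cd_add_commute[of n "cd_scale r1 I"])
  have "cd_mult (cd_cplx n I r1 s1) (cd_cplx n I r2 s2)
      = cd_add (cd_scale r2 (cd_cplx n I r1 s1)) (cd_scale s2 (cd_cplx n I (- s1) r1))"
    unfolding cd_cplx_def[of n I r2 s2] times_I[symmetric]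
    by (simp add: cd_distrib_left[of n] cd_mult_of_real_right[of n] cd_mult_scale_right)
  also have "\<dots> = cd_cplx n I (r1 * r2 - s1 * s2) (r1 * s2 + s1 * r2)"
    by (simp add: cplx_scale cplx_add algebra_simps)
  finally show ?thesis .
qed

lemma conj_cplx: "cd_conj (cd_cplx n I r s) = cd_cplx n I r (- s)"
  by (simp add: cd_cplx_def cd_conj_add[of n] cd_conj_scale conj_I cd_neg_def)

lemma re_cplx [simp]: "cd_re (cd_cplx n I r s) = r"
  by (simp add: cd_cplx_def cd_re_add[of n])

lemma dot_cplx_left: "cd_wf n x \<Longrightarrow> cd_dot (cd_cplx n I r s) x = r * cd_re x + s * cd_dot I x"
  by (simp add: cd_cplx_def cd_dot_add_left[of n] cd_dot_scale_left cd_dot_of_real_left)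

lemma dot_cplx_right: "cd_wf n x \<Longrightarrow> cd_dot x (cd_cplx n I r s) = r * cd_re x + s * cd_dot x I"
  using dot_cplx_left[of x r s] by (simp add: cd_dot_commute)

lemma dot_cplx_I [simp]: "cd_dot (cd_cplx n I r s) I = s"
  by (simp add: dot_cplx_left)

lemma CI_perp_iff: "a \<in> CI_perp n I \<longleftrightarrow> cd_wf n a \<and> cd_re a = 0 \<and> cd_dot a I = 0"
proof
  assume a: "a \<in> CI_perp n I"
  then have "cd_wf n a" "cd_inner a (cd_cplx n I 1 0) = 0" "cd_inner a (cd_cplx n I 0 1) = 0"
    by (auto simp: CI_perp_def CD_def CI_eq)
  then show "cd_wf n a \<and> cd_re a = 0 \<and> cd_dot a I = 0"
    by (simp add: cd_inner_eq_dot dot_cplx_right)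
qed (auto simp: CI_perp_def CI_eq CD_def cd_inner_eq_dot dot_cplx_right)

lemma CI_orthogonal_CI_perp: "y \<in> CI n I \<Longrightarrow> z \<in> CI_perp n I \<Longrightarrow> cd_dot y z = 0"
  by (auto simp: CI_eq CI_perp_iff cd_dot_commute[of _ z] dot_cplx_right)

lemma CI_add_CI_perp_eq_zero_iff:
  "y \<in> CI n I \<Longrightarrow> z \<in> CI_perp n I \<Longrightarrow> cd_add y z = cd_zero n \<longleftrightarrow> y = cd_zero n \<and> z = cd_zero n"
  by (rule cd_add_eq_zero_if_orthogonal) (auto simp: wf_CI CI_perp_iff CI_orthogonal_CI_perp)

lemma diff_cplx_in_CI_perp_iff:
  "cd_wf n a \<Longrightarrow> cd_diff a (cd_cplx n I r s) \<in> CI_perp n I \<longleftrightarrow> r = cd_re a \<and> s = cd_dot a I"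
  by (auto simp: CI_perp_iff cd_re_diff[of n] cd_dot_diff_left[of n])

lemma proj_I_eq: "cd_wf n a \<Longrightarrow> proj_I n I a = cd_cplx n I (cd_re a) (cd_dot a I)"
  unfolding proj_I_def by (rule the_equality) (auto simp: CI_eq diff_cplx_in_CI_perp_iff)

lemma proj_I_in_CI: "cd_wf n a \<Longrightarrow> proj_I n I a \<in> CI n I"
  by (auto simp: proj_I_eq CI_eq)

lemma wf_proj_I [simp]: "cd_wf n a \<Longrightarrow> cd_wf n (proj_I n I a)"
  by (simp add: proj_I_eq)

lemma diff_proj_I_in_CI_perp: "cd_wf n a \<Longrightarrow> cd_diff a (proj_I n I a) \<in> CI_perp n I"
  by (simp add: proj_I_eq diff_cplx_in_CI_perp_iff)

lemma CI_add: "p \<in> CI n I \<Longrightarrow> q \<in> CI n I \<Longrightarrow> cd_add p q \<in> CI n I"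
  by (clarsimp simp: CI_eq cplx_add) blast

lemma CI_mult: "p \<in> CI n I \<Longrightarrow> q \<in> CI n I \<Longrightarrow> cd_mult p q \<in> CI n I"
  by (clarsimp simp: CI_eq cplx_mult) blast

lemma CI_conj: "p \<in> CI n I \<Longrightarrow> cd_conj p \<in> CI n I"
  by (clarsimp simp: CI_eq conj_cplx) blast

lemma zero_in_CI: "cd_zero n \<in> CI n I"
  by (auto simp: CI_eq cplx_zero)

lemma one_in_CI: "cd_one n \<in> CI n I"
  by (auto simp: CI_eq cplx_one)

lemma CI_pow: "p \<in> CI n I \<Longrightarrow> cd_pow n p k \<in> CI n I"
  by (induction k) (auto intro: one_in_CI CI_mult)

lemma CI_perp_add: "a \<in> CI_perp n I \<Longrightarrow> b \<in> CI_perp n I \<Longrightarrow> cd_add a b \<in> CI_perp n I"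
  by (simp add: CI_perp_iff cd_re_add[of n] cd_dot_add_left[of n])

lemma zero_in_CI_perp: "cd_zero n \<in> CI_perp n I"
  by (simp add: CI_perp_iff cd_dot_of_real_left)

lemma CI_perp_mult_CI:
  assumes a: "a \<in> CI_perp n I" and c: "c \<in> CI n I"
  shows "cd_mult a c \<in> CI_perp n I"
proof -
  have wf: "cd_wf n a" "cd_wf n c"
    using a c by (auto simp: CI_perp_iff wf_CI)
  have "cd_inner (cd_mult a c) b = 0" if b: "b \<in> CI n I" for b
  proof -
    have "cd_inner (cd_mult a c) b = cd_dot a (cd_mult b (cd_conj c))"
      using wf wf_CI[OF b] cd_mult_adjoint[of n a c b] by (simp add: cd_inner_eq_dot[of n])
    also have "\<dots> = 0"
      using CI_orthogonal_CI_perp[OF CI_mult[OF b CI_conj[OF c]] a] by (simp add: cd_dot_commute)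
    finally show ?thesis .
  qed
  with wf show ?thesis
    by (simp add: CI_perp_def CD_def)
qed

lemma poly_eval_in_CI: "set f \<subseteq> CI n I \<Longrightarrow> lam \<in> CI n I \<Longrightarrow> poly_eval n f lam \<in> CI n I"
  by (rule poly_eval_closed) (auto intro: zero_in_CI CI_add CI_mult CI_pow)

lemma poly_eval_in_CI_perp:
  "set f \<subseteq> CI_perp n I \<Longrightarrow> lam \<in> CI n I \<Longrightarrow> poly_eval n f lam \<in> CI_perp n I"
  by (rule poly_eval_closed) (auto intro: zero_in_CI_perp CI_perp_add CI_perp_mult_CI CI_pow)

lemma poly_eval_split:
  assumes f: "set f \<subseteq> CD n" and lam: "lam \<in> CI n I"
  shows "poly_eval n f lam
    = cd_add (poly_eval n (poly_I n I f) lam) (poly_eval n (poly_I_perp n I f) lam)"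
proof -
  have wf: "cd_wf n a" if "a \<in> set f" for a
    using f that by (auto simp: CD_def)
  have "f = map (\<lambda>a. cd_add (proj_I n I a) (cd_diff a (proj_I n I a))) f"
    by (rule map_idI[symmetric]) (simp add: wf cd_add_diff_cancel[of n])
  also have "poly_eval n \<dots> lam
      = cd_add (poly_eval n (poly_I n I f) lam) (poly_eval n (poly_I_perp n I f) lam)"
    unfolding poly_I_def poly_I_perp_def using wf wf_CI[OF lam]
    by (intro poly_eval_map_add) auto
  finally show ?thesis .
qed

end

theorem proposition4p6:
  fixes n :: nat and I :: cd and f :: "cd list" and lam :: cd
  assumes "I \<in> CD n" and "cd_tr I = 0" and "cd_norm I = 1"
    and "set f \<subseteq> CD n"
    and "lam \<in> CI n I"
  shows "poly_eval n (poly_I n I f) lam \<in> CI n I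
     \<and> poly_eval n (poly_I_perp n I f) lam \<in> CI_perp n I
     \<and> (poly_eval n f lam = cd_zero n \<longleftrightarrow>
          poly_eval n (poly_I n I f) lam = cd_zero n \<and> poly_eval n (poly_I_perp n I f) lam = cd_zero n)"
proof -
  interpret cd_imag_unit n I
    using assms(1-3) by unfold_locales
  have wf_f: "cd_wf n a" if "a \<in> set f" for a
    using assms(4) that by (auto simp: CD_def)
  have fI: "poly_eval n (poly_I n I f) lam \<in> CI n I"
    using assms(5) wf_f by (auto simp: poly_I_def intro!: poly_eval_in_CI proj_I_in_CI)
  have fI_perp: "poly_eval n (poly_I_perp n I f) lam \<in> CI_perp n I"
    using assms(5) wf_f
    by (auto simp: poly_I_perp_def intro!: poly_eval_in_CI_perp diff_proj_I_in_CI_perp)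
  have "poly_eval n f lam = cd_zero n \<longleftrightarrow>
      poly_eval n (poly_I n I f) lam = cd_zero n \<and> poly_eval n (poly_I_perp n I f) lam = cd_zero n"
    unfolding poly_eval_split[OF assms(4,5)] by (rule CI_add_CI_perp_eq_zero_iff[OF fI fI_perp])
  with fI fI_perp show ?thesis by blast
qed

end
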